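(* For any diagonal section $\delta$ and any $x_0\in[0,1]$, $$\max_{y\in[x_0,1]}\big(\overline{C}_\delta(x_0,y)-B_\delta(x_0,y)\big)=\overline{C}_\delta(x_0,g^\delta_U(x_0))-B_\delta(x_0,g^\delta_U(x_0))=\min_{t\in[x_0,g^\delta_U(x_0)]}\widehat{\delta}(t).$$
   Context: $\mathbb{I}=[0,1]$. A (bivariate) copula is a function $C\colon\mathbb{I}^2\to\mathbb{I}$ with $C(x,0)=C(0,y)=0$, $C(x,1)=x$, $C(1,y)=y$, and $C(b,d)+C(a,c)-C(b,c)-C(a,d)\ge 0$ for all $a\le b$, $c\le d$. A quasi-copula satisfies the same boundary conditions and is increasing and 1-Lipschitz in each variable. A diagonal section is $\delta\colon\mathbb{I}\to\mathbb{I}$ with $\delta(x)\le x$, $0\le\delta(y)-\delta(x)\le 2(y-x)$ for $x\le y$, $\delta(1)=1$; $\widehat{\delta}(x)=x-\delta(x)$. $\overline{C}_\delta(x,y)=\sup\{C(x,y): C\text{ copula with } C(t,t)=\delta(t)\ \forall t\}$, $B_\delta(x,y)=\inf\{Q(x,y): Q\text{ quasi-copula with } Q(t,t)=\delta(t)\ \forall t\}$. For $x\le y$ let $\mathrm{TV}_x^y(\widehat{\delta})$ be the total variation of $\widehat{\delta}$ on $[x,y]$, and for $y<x$ set $\mathrm{TV}_x^y=-\mathrm{TV}_y^x$. Let $f^\delta(x,y)=y-\frac12(\widehat{\delta}(x)+\widehat{\delta}(y)+\mathrm{TV}_x^y(\widehat{\delta}))$, $D_f^\circ(\delta)=\{(x,y)\in\mathbb{I}^2: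 f^\delta(x,y)<\min\{x,y\}\}$, $D_f(\delta)=\overline{D_f^\circ(\delta)}\cup\{(x,x):x\in\mathbb{I}\}$, and $g^\delta_U(x)=\max\{y\in\mathbb{I}:(x,y)\in D_f(\delta)\}$. *)

theory Defs
  imports "HOL-Analysis.Analysis"
begin

definition copula :: "(real \<Rightarrow> real \<Rightarrow> real) \<Rightarrow> bool" where
  "copula C \<longleftrightarrow>
     (\<forall>x\<in>{0..1}. \<forall>y\<in>{0..1}. C x y \<in> {0..1}) \<and>
     (\<forall>x\<in>{0..1}. C x 0 = 0 \<and> C 0 x = 0 \<and> C x 1 = x \<and> C 1 x = x) \<and>
     (\<forall>a\<in>{0..1}. \<forall>b\<in>{0..1}. \<forall>c\<in>{0..1}. \<forall>d\<in>{0..1}.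
        a \<le> b \<longrightarrow> c \<le> d \<longrightarrow> C b d + C a c - C b c - C a d \<ge> 0)"

definition quasi_copula :: "(real \<Rightarrow> real \<Rightarrow> real) \<Rightarrow> bool" where
  "quasi_copula Q \<longleftrightarrow>
     (\<forall>x\<in>{0..1}. \<forall>y\<in>{0..1}. Q x y \<in> {0..1}) \<and>
     (\<forall>x\<in>{0..1}. Q x 0 = 0 \<and> Q 0 x = 0 \<and> Q x 1 = x \<and> Q 1 x = x) \<and>
     (\<forall>x1\<in>{0..1}. \<forall>x2\<in>{0..1}. \<forall>y\<in>{0..1}. x1 \<le> x2 \<longrightarrow>
        Q x1 y \<le> Q x2 y \<and> Q x2 y - Q x1 y \<le> x2 - x1 \<and>
        Q y x1 \<le> Q y x2 \<and> Q y x2 - Q y x1 \<le> x2 - x1)"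

definition diagonal_section :: "(real \<Rightarrow> real) \<Rightarrow> bool" where
  "diagonal_section \<delta> \<longleftrightarrow>
     (\<forall>x\<in>{0..1}. \<delta> x \<in> {0..1} \<and> \<delta> x \<le> x) \<and>
     (\<forall>x\<in>{0..1}. \<forall>y\<in>{0..1}. x \<le> y \<longrightarrow> 0 \<le> \<delta> y - \<delta> x \<and> \<delta> y - \<delta> x \<le> 2 * (y - x)) \<and>
     \<delta> 1 = 1"

definition delta_hat :: "(real \<Rightarrow> real) \<Rightarrow> real \<Rightarrow> real" where
  "delta_hat \<delta> x = x - \<delta> x"

definition upper_copula :: "(real \<Rightarrow> real) \<Rightarrow> real \<Rightarrow> real \<Rightarrow> real" where
  "upper_copula \<delta> x y =
     Sup {C x y | C. copula C \<and> (\<forall>t\<in>{0..1}. C t t = \<delta> t)}"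

definition lower_qcopula :: "(real \<Rightarrow> real) \<Rightarrow> real \<Rightarrow> real \<Rightarrow> real" where
  "lower_qcopula \<delta> x y =
     Inf {Q x y | Q. quasi_copula Q \<and> (\<forall>t\<in>{0..1}. Q t t = \<delta> t)}"

definition total_variation :: "(real \<Rightarrow> real) \<Rightarrow> real \<Rightarrow> real \<Rightarrow> real" where
  "total_variation h a b =
     Sup {(\<Sum>i<n. \<bar>h (t (Suc i)) - h (t i)\<bar>) | t n.
            t 0 = a \<and> t n = b \<and> (\<forall>i<n. t i \<le> t (Suc i))}"

definition TV :: "(real \<Rightarrow> real) \<Rightarrow> real \<Rightarrow> real \<Rightarrow> real" where
  "TV h x y = (if x \<le> y then total_variation h x y else - total_variation h y x)"

definition f_delta :: "(real \<Rightarrow> real) \<Rightarrow> real \<Rightarrow> real \<Rightarrow> real" where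
  "f_delta \<delta> x y = y - (delta_hat \<delta> x + delta_hat \<delta> y + TV (delta_hat \<delta>) x y) / 2"

definition Df_open :: "(real \<Rightarrow> real) \<Rightarrow> (real \<times> real) set" where
  "Df_open \<delta> = {(x, y). x \<in> {0..1} \<and> y \<in> {0..1} \<and> f_delta \<delta> x y < min x y}"

definition Df :: "(real \<Rightarrow> real) \<Rightarrow> (real \<times> real) set" where
  "Df \<delta> = closure (Df_open \<delta>) \<union> {(x, x) | x. x \<in> {0..1}}"

definition gU :: "(real \<Rightarrow> real) \<Rightarrow> real \<Rightarrow> real" where
  "gU \<delta> x = (GREATEST y. y \<in> {0..1} \<and> (x, y) \<in> Df \<delta>)"

end

theory Submission
  imports Defs
begin

(* For x0 <= y one has B_delta(x0,y) = x0 - min of delta_hat on [x0,y], while every copula C with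
   diagonal delta satisfies C(x0,y) <= min x0 (f^delta(x0,y)). Writing P for the positive variation
   of delta_hat, f^delta(x,y) = y - delta_hat(x) - (P(y) - P(x)); so y - f^delta(x0,y) increases
   with y, and g = g_U(x0) is where f^delta(x0,.) crosses x0: f^delta(x0,g) >= x0, with equality
   when g > x0. A copula glued from P and t + delta_hat(t) - P(t) attains C(x0,g) = x0, so the gap
   at g is the minimum m of delta_hat on [x0,g]. For y beyond a minimiser t the bound x0 keeps the
   gap below m; before t the bound f^delta does, since delta_hat and P are 1-Lipschitz. *)

section \<open>Total variation\<close>

definition is_partition :: "real \<Rightarrow> real \<Rightarrow> (nat \<Rightarrow> real) \<Rightarrow> nat \<Rightarrow> bool" where
  "is_partition a b t n \<longleftrightarrow> t 0 = a \<and> t n = b \<and> (\<forall>i<n. t i \<le> t (Suc i))"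

definition variation_sum :: "(real \<Rightarrow> real) \<Rightarrow> (nat \<Rightarrow> real) \<Rightarrow> nat \<Rightarrow> real" where
  "variation_sum h t n = (\<Sum>i<n. \<bar>h (t (Suc i)) - h (t i)\<bar>)"

lemma total_variation_eq_Sup:
  "total_variation h a b = Sup {variation_sum h t n | t n. is_partition a b t n}"
  unfolding total_variation_def variation_sum_def is_partition_def by simp

lemma is_partition_trivial: "a \<le> b \<Longrightarrow> is_partition a b (\<lambda>i. if i = 0 then a else b) 1"
  unfolding is_partition_def by auto

lemma is_partition_bounds:
  assumes "is_partition a b t n" "i \<le> n"
  shows "a \<le> t i" "t i \<le> b"
proof -
  have step: "\<And>j. j \<in> {..<n} \<Longrightarrow> t j \<le> t (Suc j)" using assms(1) unfolding is_partition_def by auto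
  have "{0..<i} \<subseteq> {..<n}" "{i..<n} \<subseteq> {..<n}" using assms(2) by auto
  then show "a \<le> t i" "t i \<le> b"
    using lift_Suc_mono_le_ivl[of "{..<n}" t 0 i] lift_Suc_mono_le_ivl[of "{..<n}" t i n] step assms
    unfolding is_partition_def by auto
qed

lemma variation_sum_le_increments:
  assumes t: "is_partition a b t n"
    and F: "\<And>u v. a \<le> u \<Longrightarrow> u \<le> v \<Longrightarrow> v \<le> b \<Longrightarrow> \<bar>h v - h u\<bar> \<le> F v - F u"
  shows "variation_sum h t n \<le> F b - F a"
proof -
  have "variation_sum h t n \<le> (\<Sum>i<n. F (t (Suc i)) - F (t i))"
    unfolding variation_sum_def
  proof (rule sum_mono)
    fix i assume "i \<in> {..<n}"
    then show "\<bar>h (t (Suc i)) - h (t i)\<bar> \<le> F (t (Suc i)) - F (t i)"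
      using t is_partition_bounds[OF t, of i] is_partition_bounds[OF t, of "Suc i"]
      by (intro F) (auto simp: is_partition_def)
  qed
  also have "\<dots> = F b - F a"
    using t sum_lessThan_telescope[of "\<lambda>i. F (t i)"] by (simp add: is_partition_def)
  finally show ?thesis .
qed

lemma total_variation_le_increments:
  assumes "a \<le> b"
    and "\<And>u v. a \<le> u \<Longrightarrow> u \<le> v \<Longrightarrow> v \<le> b \<Longrightarrow> \<bar>h v - h u\<bar> \<le> F v - F u"
  shows "total_variation h a b \<le> F b - F a"
  unfolding total_variation_eq_Sup
  by (rule cSup_least) (use assms is_partition_trivial variation_sum_le_increments in blast)+

lemma lipschitz_on_abs_diff_le:
  "L-lipschitz_on {a..b} h \<Longrightarrow> a \<le> u \<Longrightarrow> u \<le> v \<Longrightarrow> v \<le> b \<Longrightarrow> \<bar>h v - h u\<bar> \<le> L * v - L * u"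
  using lipschitz_onD[of L "{a..b}" h v u] by (simp add: dist_real_def right_diff_distrib)

lemma total_variation_le_lipschitz:
  assumes "L-lipschitz_on {a..b} h" "a \<le> b"
  shows "total_variation h a b \<le> L * (b - a)"
  using total_variation_le_increments[of a b h "\<lambda>u. L * u"] lipschitz_on_abs_diff_le[OF assms(1)]
    assms(2)
  by (simp add: right_diff_distrib)

lemma variation_sum_le_total_variation:
  assumes "L-lipschitz_on {a..b} h" "is_partition a b t n"
  shows "variation_sum h t n \<le> total_variation h a b"
  unfolding total_variation_eq_Sup
proof (rule cSup_upper)
  show "bdd_above {variation_sum h t n | t n. is_partition a b t n}"
    using variation_sum_le_increments[of a b _ _ h "\<lambda>u. L * u"] lipschitz_on_abs_diff_le[OF assms(1)]
    by (intro bdd_aboveI[of _ "L * b - L * a"]) blast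
qed (use assms(2) in blast)

lemma abs_diff_le_total_variation:
  assumes "L-lipschitz_on {a..b} h" "a \<le> b"
  shows "\<bar>h b - h a\<bar> \<le> total_variation h a b"
  using variation_sum_le_total_variation[OF assms(1) is_partition_trivial[OF assms(2)]]
  by (simp add: variation_sum_def)

lemma is_partition_concat:
  assumes s: "is_partition a b s m" and t: "is_partition b c t n"
  defines "r \<equiv> \<lambda>i. if i \<le> m then s i else t (i - m)"
  shows "is_partition a c r (m + n)"
    and "variation_sum h r (m + n) = variation_sum h s m + variation_sum h t n"
proof -
  have r_step: "\<And>i. i < n \<Longrightarrow> r (Suc (i + m)) = t (Suc i) \<and> r (i + m) = t i"
    using s t unfolding r_def is_partition_def by (auto simp: Suc_diff_le)
  show "is_partition a c r (m + n)"
    using s t unfolding is_partition_def r_def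
    by (auto simp: not_le less_Suc_eq_le Suc_diff_le dest: less_imp_Suc_add)
  have "variation_sum h r (m + n) = variation_sum h r m + (\<Sum>i = m..<m + n. \<bar>h (r (Suc i)) - h (r i)\<bar>)"
    unfolding variation_sum_def
    by (simp add: sum.atLeastLessThan_concat[of 0 m "m + n", symmetric] lessThan_atLeast0)
  also have "variation_sum h r m = variation_sum h s m"
    unfolding variation_sum_def r_def by (intro sum.cong) auto
  also have "(\<Sum>i = m..<m + n. \<bar>h (r (Suc i)) - h (r i)\<bar>) = variation_sum h t n"
    using sum.shift_bounds_nat_ivl[of "\<lambda>i. \<bar>h (r (Suc i)) - h (r i)\<bar>" 0 m n] r_step
    unfolding variation_sum_def by (simp add: add.commute lessThan_atLeast0)
  finally show "variation_sum h r (m + n) = variation_sum h s m + variation_sum h t n" .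
qed

lemma is_partition_min_max:
  assumes "is_partition a c t n" "a \<le> b" "b \<le> c"
  shows "is_partition a b (\<lambda>i. min (t i) b) n" "is_partition b c (\<lambda>i. max (t i) b) n"
  using assms unfolding is_partition_def by (auto simp: min_def max_def)

lemma variation_sum_le_min_max:
  assumes "is_partition a c t n"
  shows "variation_sum h t n
    \<le> variation_sum h (\<lambda>i. min (t i) b) n + variation_sum h (\<lambda>i. max (t i) b) n"
  unfolding variation_sum_def sum.distrib[symmetric]
proof (rule sum_mono)
  fix i assume "i \<in> {..<n}"
  then have "t i \<le> t (Suc i)" using assms unfolding is_partition_def by auto
  then consider "t (Suc i) \<le> b" | "b \<le> t i" | "t i \<le> b" "b \<le> t (Suc i)" by linarith
  then show "\<bar>h (t (Suc i)) - h (t i)\<bar>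
    \<le> \<bar>h (min (t (Suc i)) b) - h (min (t i) b)\<bar> + \<bar>h (max (t (Suc i)) b) - h (max (t i) b)\<bar>"
  proof cases
    case 3
    then show ?thesis
      using abs_triangle_ineq[of "h b - h (t i)" "h (t (Suc i)) - h b"] by (simp add: min_def max_def)
  qed (use \<open>t i \<le> t (Suc i)\<close> in \<open>simp_all add: min_def max_def\<close>)
qed

lemma total_variation_add:
  assumes L: "L-lipschitz_on {a..c} h" and ab: "a \<le> b" and bc: "b \<le> c"
  shows "total_variation h a c = total_variation h a b + total_variation h b c"
proof (rule antisym)
  have Lab: "L-lipschitz_on {a..b} h" and Lbc: "L-lipschitz_on {b..c} h"
    using L ab bc by (auto intro: lipschitz_on_subset)
  have nonempty: "{variation_sum h t n | t n. is_partition u v t n} \<noteq> {}" if "u \<le> v" for u v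
    using is_partition_trivial[OF that] by blast
  show "total_variation h a c \<le> total_variation h a b + total_variation h b c"
    unfolding total_variation_eq_Sup[of h a c]
  proof (rule cSup_least)
    show "{variation_sum h t n | t n. is_partition a c t n} \<noteq> {}"
      using nonempty ab bc by simp
  next
    fix v assume "v \<in> {variation_sum h t n | t n. is_partition a c t n}"
    then obtain t n where t: "is_partition a c t n" and v: "v = variation_sum h t n" by blast
    show "v \<le> total_variation h a b + total_variation h b c"
      using v variation_sum_le_min_max[OF t, of h b]
        variation_sum_le_total_variation[OF Lab is_partition_min_max(1)[OF t ab bc]]
        variation_sum_le_total_variation[OF Lbc is_partition_min_max(2)[OF t ab bc]]
      by linarith
  qed
  have concat: "variation_sum h s m \<le> total_variation h a c - variation_sum h t n"
    if "is_partition a b s m" "is_partition b c t n" for s m t n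
    using is_partition_concat[OF that] variation_sum_le_total_variation[OF L]
    by fastforce
  have "total_variation h a b \<le> total_variation h a c - variation_sum h t n"
    if "is_partition b c t n" for t n
    unfolding total_variation_eq_Sup[of h a b]
    by (rule cSup_least) (use nonempty[OF ab] concat[OF _ that] in blast)+
  then have "total_variation h b c \<le> total_variation h a c - total_variation h a b"
    unfolding total_variation_eq_Sup[of h b c]
    by (intro cSup_least) (use nonempty[OF bc] in \<open>blast, fastforce\<close>)
  then show "total_variation h a b + total_variation h b c \<le> total_variation h a c" by simp
qed

lemma total_variation_increment_bounds:
  assumes "L-lipschitz_on {a..c} h" "a \<le> s" "s \<le> t" "t \<le> c"
  shows "\<bar>h t - h s\<bar> \<le> total_variation h a t - total_variation h a s"
    and "total_variation h a t - total_variation h a s \<le> L * (t - s)"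
proof -
  have L: "L-lipschitz_on {a..t} h" "L-lipschitz_on {s..t} h"
    using assms by (auto intro: lipschitz_on_subset)
  have "total_variation h a t - total_variation h a s = total_variation h s t"
    using total_variation_add[OF L(1) assms(2,3)] by simp
  then show "\<bar>h t - h s\<bar> \<le> total_variation h a t - total_variation h a s"
    and "total_variation h a t - total_variation h a s \<le> L * (t - s)"
    using abs_diff_le_total_variation[OF L(2) assms(3)] total_variation_le_lipschitz[OF L(2) assms(3)]
    by simp_all
qed

section \<open>Positive variation and diagonal sections\<close>

definition positive_variation :: "(real \<Rightarrow> real) \<Rightarrow> real \<Rightarrow> real" where
  "positive_variation h t = (total_variation h 0 t + h t - h 0) / 2"

lemma positive_variation_increment_bounds:
  assumes "1-lipschitz_on {0..1} h" "0 \<le> s" "s \<le> t" "t \<le> 1"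
  shows "max 0 (h t - h s) \<le> positive_variation h t - positive_variation h s"
    and "2 * (positive_variation h t - positive_variation h s) \<le> (t - s) + (h t - h s)"
  using total_variation_increment_bounds[OF assms] unfolding positive_variation_def
  by (auto simp: max_def abs_le_iff field_simps)

lemma lipschitz_positive_variation:
  assumes "1-lipschitz_on {0..1} h"
  shows "1-lipschitz_on {0..1} (positive_variation h)"
proof (rule lipschitz_onI)
  have *: "\<bar>positive_variation h t - positive_variation h s\<bar> \<le> t - s"
    if "0 \<le> s" "s \<le> t" "t \<le> 1" for s t
    using positive_variation_increment_bounds[OF assms that] lipschitz_on_abs_diff_le[OF assms, of s t]
      that
    by auto
  fix x y :: real assume "x \<in> {0..1}" "y \<in> {0..1}"
  then show "dist (positive_variation h x) (positive_variation h y) \<le> 1 * dist x y"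
    using *[of x y] *[of y x] by (cases "x \<le> y") (auto simp: dist_real_def abs_minus_commute)
qed simp

lemma diagonal_sectionD:
  assumes "diagonal_section \<delta>"
  shows "\<And>x. x \<in> {0..1} \<Longrightarrow> 0 \<le> \<delta> x \<and> \<delta> x \<le> x \<and> 2 * x - 1 \<le> \<delta> x"
    and "\<And>x y. x \<in> {0..1} \<Longrightarrow> y \<in> {0..1} \<Longrightarrow> x \<le> y \<Longrightarrow> 0 \<le> \<delta> y - \<delta> x \<and> \<delta> y - \<delta> x \<le> 2 * (y - x)"
    and "\<delta> 1 = 1"
  using assms unfolding diagonal_section_def by fastforce+

lemma delta_hat_bounds:
  assumes "diagonal_section \<delta>" "x \<in> {0..1}"
  shows "0 \<le> delta_hat \<delta> x" "delta_hat \<delta> x \<le> x" "delta_hat \<delta> x \<le> 1 - x"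
  using diagonal_sectionD(1)[OF assms] unfolding delta_hat_def by auto

lemma lipschitz_delta_hat:
  assumes "diagonal_section \<delta>"
  shows "1-lipschitz_on {0..1} (delta_hat \<delta>)"
proof (rule lipschitz_onI)
  fix x y :: real assume "x \<in> {0..1}" "y \<in> {0..1}"
  then show "dist (delta_hat \<delta> x) (delta_hat \<delta> y) \<le> 1 * dist x y"
    using diagonal_sectionD(2)[OF assms, of x y] diagonal_sectionD(2)[OF assms, of y x]
    by (cases "x \<le> y") (auto simp: dist_real_def delta_hat_def abs_le_iff)
qed simp

lemma delta_hat_attains_min:
  assumes "diagonal_section \<delta>" "0 \<le> x" "x \<le> y" "y \<le> 1"
  obtains t where "t \<in> {x..y}" "\<And>s. s \<in> {x..y} \<Longrightarrow> delta_hat \<delta> t \<le> delta_hat \<delta> s"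
proof -
  have "continuous_on {x..y} (delta_hat \<delta>)"
    by (rule continuous_on_subset[OF lipschitz_on_continuous_on[OF lipschitz_delta_hat[OF assms(1)]]])
      (use assms in auto)
  then show ?thesis using continuous_attains_inf[of "{x..y}" "delta_hat \<delta>"] assms(3) that by auto
qed

abbreviation pos_var :: "(real \<Rightarrow> real) \<Rightarrow> real \<Rightarrow> real" where
  "pos_var \<delta> \<equiv> positive_variation (delta_hat \<delta>)"

lemma f_delta_eq_pos_var:
  assumes "diagonal_section \<delta>" "0 \<le> x" "x \<le> y" "y \<le> 1"
  shows "f_delta \<delta> x y = y - delta_hat \<delta> x - (pos_var \<delta> y - pos_var \<delta> x)"
proof -
  have "1-lipschitz_on {0..y} (delta_hat \<delta>)"
    by (rule lipschitz_on_subset[OF lipschitz_delta_hat[OF assms(1)]]) (use assms in auto)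
  from total_variation_add[OF this assms(2,3)] show ?thesis
    using assms(3) unfolding f_delta_def TV_def positive_variation_def by (simp add: field_simps)
qed

section \<open>Copulas glued along the diagonal\<close>

definition rect_volume :: "(real \<Rightarrow> real \<Rightarrow> real) \<Rightarrow> real \<Rightarrow> real \<Rightarrow> real \<Rightarrow> real \<Rightarrow> real" where
  "rect_volume C x1 x2 y1 y2 = C x2 y2 + C x1 y1 - C x2 y1 - C x1 y2"

lemma rect_volume_split:
  "rect_volume C a b c d = rect_volume C a s c d + rect_volume C s t c d + rect_volume C t b c d"
  "rect_volume C a b c d = rect_volume C a b c s + rect_volume C a b s t + rect_volume C a b t d"
  unfolding rect_volume_def by simp_all

lemma max_0_diff_submodular:
  fixes u1 u2 v1 v2 :: real
  assumes "u1 \<le> u2" "v1 \<le> v2"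
  shows "max 0 (u2 - v2) + max 0 (u1 - v1) \<le> max 0 (u2 - v1) + max 0 (u1 - v2)"
  using assms by (simp add: max_def)

definition glued_copula ::
    "(real \<Rightarrow> real) \<Rightarrow> (real \<Rightarrow> real) \<Rightarrow> (real \<Rightarrow> real) \<Rightarrow> real \<Rightarrow> real \<Rightarrow> real" where
  "glued_copula h A A' x y =
     (if x \<le> y then x - max 0 (A x - A y + h y) else y - max 0 (A' y - A' x + h x))"

(* Submodularity of max 0 makes C 2-increasing on rectangles above or below the diagonal;
   on squares across it the monotonicity of t + h t - A t - A' t takes over. *)
locale glued_copula_conditions =
  fixes h A A' :: "real \<Rightarrow> real"
  assumes h_bounds: "\<And>t. t \<in> {0..1} \<Longrightarrow> 0 \<le> h t \<and> h t \<le> t"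
    and h_1: "h 1 = 0"
    and mono_A: "mono_on {0..1} A"
    and mono_A_minus_h: "mono_on {0..1} (\<lambda>t. A t - h t)"
    and mono_A': "mono_on {0..1} A'"
    and mono_A'_minus_h: "mono_on {0..1} (\<lambda>t. A' t - h t)"
    and mono_diagonal: "mono_on {0..1} (\<lambda>t. t + h t - A t - A' t)"
begin

abbreviation C where "C \<equiv> glued_copula h A A'"

lemma C_above: "x \<le> y \<Longrightarrow> C x y = x - max 0 (A x - A y + h y)"
  unfolding glued_copula_def by simp

lemma C_below: "y \<le> x \<Longrightarrow> C x y = y - max 0 (A' y - A' x + h x)"
  unfolding glued_copula_def by auto

lemma C_diagonal: "t \<in> {0..1} \<Longrightarrow> C t t = t - h t"
  using h_bounds[of t] by (simp add: C_above)

lemma volume_above: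
  assumes "0 \<le> x1" "x1 \<le> x2" "x2 \<le> y1" "y1 \<le> y2" "y2 \<le> 1"
  shows "0 \<le> rect_volume C x1 x2 y1 y2"
proof -
  have "max 0 (A x2 - (A y2 - h y2)) + max 0 (A x1 - (A y1 - h y1))
    \<le> max 0 (A x2 - (A y1 - h y1)) + max 0 (A x1 - (A y2 - h y2))"
    using assms by (intro max_0_diff_submodular mono_onD[OF mono_A] mono_onD[OF mono_A_minus_h]) auto
  then show ?thesis unfolding rect_volume_def using assms by (simp add: C_above algebra_simps)
qed

lemma volume_below:
  assumes "0 \<le> y1" "y1 \<le> y2" "y2 \<le> x1" "x1 \<le> x2" "x2 \<le> 1"
  shows "0 \<le> rect_volume C x1 x2 y1 y2"
proof -
  have "max 0 (A' y2 - (A' x2 - h x2)) + max 0 (A' y1 - (A' x1 - h x1))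
    \<le> max 0 (A' y2 - (A' x1 - h x1)) + max 0 (A' y1 - (A' x2 - h x2))"
    using assms by (intro max_0_diff_submodular mono_onD[OF mono_A'] mono_onD[OF mono_A'_minus_h]) auto
  then show ?thesis unfolding rect_volume_def using assms by (simp add: C_below algebra_simps)
qed

lemma volume_diagonal_square:
  assumes "0 \<le> s" "s \<le> t" "t \<le> 1"
  shows "0 \<le> rect_volume C s t s t"
proof -
  have "s + h s - A s - A' s \<le> t + h t - A t - A' t"
    using mono_onD[OF mono_diagonal] assms by auto
  moreover have "C t t = t - h t" "C s s = s - h s" using C_diagonal assms by auto
  ultimately show ?thesis
    unfolding rect_volume_def using assms by (simp add: C_above C_below max_def)
qed

lemma volume_nonneg:
  assumes "0 \<le> a" "a \<le> b" "b \<le> 1" "0 \<le> c" "c \<le> d" "d \<le> 1"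
  shows "0 \<le> rect_volume C a b c d"
proof -
  consider "b \<le> c" | "d \<le> a" | "c < b" "a < d" by linarith
  then show ?thesis
  proof cases
    case 1 then show ?thesis using volume_above assms by auto
  next
    case 2 then show ?thesis using volume_below assms by auto
  next
    case 3
    define s where "s = max a c"
    define t where "t = min b d"
    have st: "a \<le> s" "c \<le> s" "s \<le> t" "t \<le> b" "t \<le> d" "s = a \<or> s = c" "t = b \<or> t = d"
      using 3 assms unfolding s_def t_def by auto
    have "rect_volume C a b c d =
      (rect_volume C a s c s + rect_volume C a s s t + rect_volume C a s t d) +
      (rect_volume C s t c s + rect_volume C s t s t + rect_volume C s t t d) +
      (rect_volume C t b c s + rect_volume C t b s t + rect_volume C t b t d)"
      using rect_volume_split(1)[of C a b c d s t] rect_volume_split(2)[of C _ _ c d s t] by simp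
    moreover have "rect_volume C a s c s = 0" "rect_volume C t b t d = 0"
      using st(6,7) unfolding rect_volume_def by auto
    moreover have "0 \<le> rect_volume C a s s t" "0 \<le> rect_volume C a s t d" "0 \<le> rect_volume C s t t d"
      using volume_above st assms by auto
    moreover have "0 \<le> rect_volume C s t c s" "0 \<le> rect_volume C t b c s" "0 \<le> rect_volume C t b s t"
      using volume_below st assms by auto
    moreover have "0 \<le> rect_volume C s t s t"
      using volume_diagonal_square st assms by auto
    ultimately show ?thesis by linarith
  qed
qed

lemma copula: "copula C"
proof -
  have range: "C x y \<in> {0..1}" if x: "x \<in> {0..1}" and y: "y \<in> {0..1}" for x y
  proof (cases "x \<le> y")
    case True
    then have "A x - A y + h y \<le> h x"
      using mono_onD[OF mono_A_minus_h, of x y] x y by auto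
    then show ?thesis using h_bounds[of x] x True by (auto simp: C_above)
  next
    case False
    then have "A' y - A' x + h x \<le> h y"
      using mono_onD[OF mono_A'_minus_h, of y x] x y by auto
    then show ?thesis using h_bounds[of y] y False by (auto simp: C_below)
  qed
  have boundary: "C x 0 = 0 \<and> C 0 x = 0 \<and> C x 1 = x \<and> C 1 x = x" if x: "x \<in> {0..1}" for x
  proof -
    have h0: "h 0 = 0" using h_bounds[of 0] by auto
    have "A 0 - A x + h x \<le> 0" "A' 0 - A' x + h x \<le> 0"
      using mono_onD[OF mono_A_minus_h, of 0 x] mono_onD[OF mono_A'_minus_h, of 0 x] x h0 by auto
    moreover have "A x - A 1 \<le> 0" "A' x - A' 1 \<le> 0"
      using mono_onD[OF mono_A, of x 1] mono_onD[OF mono_A', of x 1] x by auto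
    ultimately show ?thesis
      using x h_1 h0 by (auto simp: C_above C_below)
  qed
  have "0 \<le> C b d + C a c - C b c - C a d"
    if "a \<in> {0..1}" "b \<in> {0..1}" "c \<in> {0..1}" "d \<in> {0..1}" "a \<le> b" "c \<le> d" for a b c d
    using volume_nonneg[of a b c d] that unfolding rect_volume_def by auto
  then show ?thesis
    unfolding copula_def using range boundary by blast
qed

end

definition spliced ::
    "(real \<Rightarrow> real) \<Rightarrow> (real \<Rightarrow> real) \<Rightarrow> (real \<Rightarrow> real) \<Rightarrow> real \<Rightarrow> real \<Rightarrow> real \<Rightarrow> real" where
  "spliced \<phi> \<psi> \<rho> a g t = \<phi> (min t a) + \<psi> (min (max t a) g) + \<rho> (max t g)"

lemma spliced_same: "a \<le> g \<Longrightarrow> spliced \<phi> \<phi> \<phi> a g t = \<phi> t + \<phi> a + \<phi> g"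
  unfolding spliced_def by (cases "t \<le> a"; cases "t \<le> g") (auto simp: min_def max_def)

lemma mono_on_spliced:
  assumes "mono_on {0..1} \<phi>" "mono_on {0..1} \<psi>" "mono_on {0..1} \<rho>" "0 \<le> a" "a \<le> g" "g \<le> 1"
    and F: "\<And>t. t \<in> {0..1} \<Longrightarrow> F t = spliced \<phi> \<psi> \<rho> a g t + k"
  shows "mono_on {0..1} F"
proof (rule mono_onI)
  fix s t :: real assume st: "s \<in> {0..1}" "t \<in> {0..1}" "s \<le> t"
  have "\<phi> (min s a) \<le> \<phi> (min t a)" "\<psi> (min (max s a) g) \<le> \<psi> (min (max t a) g)"
    "\<rho> (max s g) \<le> \<rho> (max t g)"
    using st assms(4-6)
    by (auto intro!: mono_onD[OF assms(1)] mono_onD[OF assms(2)] mono_onD[OF assms(3)])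
  then show "F s \<le> F t" using st by (simp add: F spliced_def)
qed

lemma pos_var_monotonicities:
  assumes "diagonal_section \<delta>"
  defines "h \<equiv> delta_hat \<delta>"
  shows "mono_on {0..1} (pos_var \<delta>)"
    and "mono_on {0..1} (\<lambda>t. pos_var \<delta> t - h t)"
    and "mono_on {0..1} (\<lambda>t. t + h t - pos_var \<delta> t)"
    and "mono_on {0..1} (\<lambda>t. t - pos_var \<delta> t)"
    and "mono_on {0..1} (\<lambda>t. t + h t - 2 * pos_var \<delta> t)"
proof -
  have L: "1-lipschitz_on {0..1} h" unfolding h_def by (rule lipschitz_delta_hat[OF assms(1)])
  have incr: "max 0 (h t - h s) \<le> pos_var \<delta> t - pos_var \<delta> s"
    "2 * (pos_var \<delta> t - pos_var \<delta> s) \<le> (t - s) + (h t - h s)"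
    "\<bar>h t - h s\<bar> \<le> t - s"
    if "s \<in> {0..1}" "t \<in> {0..1}" "s \<le> t" for s t
    using positive_variation_increment_bounds[OF L, of s t] lipschitz_on_abs_diff_le[OF L, of s t] that
    unfolding h_def by auto
  have "pos_var \<delta> s \<le> pos_var \<delta> t \<and> pos_var \<delta> s - h s \<le> pos_var \<delta> t - h t
      \<and> s + h s - pos_var \<delta> s \<le> t + h t - pos_var \<delta> t \<and> s - pos_var \<delta> s \<le> t - pos_var \<delta> t
      \<and> s + h s - 2 * pos_var \<delta> s \<le> t + h t - 2 * pos_var \<delta> t"
    if "s \<in> {0..1}" "t \<in> {0..1}" "s \<le> t" for s t
    using incr[OF that] by (auto simp: abs_le_iff)
  then show "mono_on {0..1} (pos_var \<delta>)"
    and "mono_on {0..1} (\<lambda>t. pos_var \<delta> t - h t)"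
    and "mono_on {0..1} (\<lambda>t. t + h t - pos_var \<delta> t)"
    and "mono_on {0..1} (\<lambda>t. t - pos_var \<delta> t)"
    and "mono_on {0..1} (\<lambda>t. t + h t - 2 * pos_var \<delta> t)"
    by (auto intro!: mono_onI)
qed

(* Below the diagonal, and above it outside [a,g], the copula grows like the positive variation P
   of delta_hat; inside [a,g] it uses t + delta_hat t - P t instead, which makes C a g = a
   exactly when a <= f_delta delta a g. *)
definition upper_generator :: "(real \<Rightarrow> real) \<Rightarrow> real \<Rightarrow> real \<Rightarrow> real \<Rightarrow> real" where
  "upper_generator \<delta> a g = spliced (pos_var \<delta>) (\<lambda>t. t + delta_hat \<delta> t - pos_var \<delta> t) (pos_var \<delta>) a g"

definition copula_through :: "(real \<Rightarrow> real) \<Rightarrow> real \<Rightarrow> real \<Rightarrow> real \<Rightarrow> real \<Rightarrow> real" where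
  "copula_through \<delta> a g = glued_copula (delta_hat \<delta>) (upper_generator \<delta> a g) (pos_var \<delta>)"

lemma glued_copula_conditions_copula_through:
  assumes "diagonal_section \<delta>" "0 \<le> a" "a \<le> g" "g \<le> 1"
  shows "glued_copula_conditions (delta_hat \<delta>) (upper_generator \<delta> a g) (pos_var \<delta>)"
proof
  let ?h = "delta_hat \<delta>" and ?P = "pos_var \<delta>" and ?A = "upper_generator \<delta> a g"
  note mono = pos_var_monotonicities[OF assms(1)]
  note spl = spliced_same[OF assms(3)]
  show "\<And>t. t \<in> {0..1} \<Longrightarrow> 0 \<le> ?h t \<and> ?h t \<le> t"
    using delta_hat_bounds[OF assms(1)] by auto
  show "?h 1 = 0" using delta_hat_bounds[OF assms(1), of 1] by simp
  show "mono_on {0..1} ?A"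
    by (rule mono_on_spliced[OF mono(1,3,1) assms(2-4), where k = 0]) (simp add: upper_generator_def)
  show "mono_on {0..1} (\<lambda>t. ?A t - ?h t)"
  proof (rule mono_on_spliced[OF mono(2,4,2) assms(2-4), where k = "?h a + ?h g"])
    fix t :: real
    show "?A t - ?h t
      = spliced (\<lambda>t. ?P t - ?h t) (\<lambda>t. t - ?P t) (\<lambda>t. ?P t - ?h t) a g t + (?h a + ?h g)"
      using spl[of ?h t] unfolding upper_generator_def spliced_def by linarith
  qed
  show "mono_on {0..1} ?P" "mono_on {0..1} (\<lambda>t. ?P t - ?h t)" by (fact mono(1,2))+
  show "mono_on {0..1} (\<lambda>t. t + ?h t - ?A t - ?P t)"
  proof (rule mono_on_spliced[OF mono(5) mono_on_const mono(5) assms(2-4),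
        where k = "- (a + ?h a - ?P a) - (g + ?h g - ?P g)"])
    fix t :: real
    show "t + ?h t - ?A t - ?P t
      = spliced (\<lambda>t. t + ?h t - 2 * ?P t) (\<lambda>_. 0) (\<lambda>t. t + ?h t - 2 * ?P t) a g t
        + (- (a + ?h a - ?P a) - (g + ?h g - ?P g))"
      using spl[of "\<lambda>t. t + ?h t - ?P t" t] unfolding upper_generator_def spliced_def by linarith
  qed
qed

lemma copula_through_copula_diagonal:
  assumes "diagonal_section \<delta>" "0 \<le> a" "a \<le> g" "g \<le> 1"
  shows "copula (copula_through \<delta> a g)" "\<forall>t\<in>{0..1}. copula_through \<delta> a g t t = \<delta> t"
proof -
  interpret glued_copula_conditions "delta_hat \<delta>" "upper_generator \<delta> a g" "pos_var \<delta>"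
    by (rule glued_copula_conditions_copula_through[OF assms])
  show "copula (copula_through \<delta> a g)" unfolding copula_through_def by (rule copula)
  show "\<forall>t\<in>{0..1}. copula_through \<delta> a g t t = \<delta> t"
    unfolding copula_through_def using C_diagonal by (simp add: delta_hat_def)
qed

lemma copula_through_at_corner:
  assumes "diagonal_section \<delta>" "0 \<le> a" "a \<le> g" "g \<le> 1" "a \<le> f_delta \<delta> a g"
  shows "copula_through \<delta> a g a g = a"
  using assms f_delta_eq_pos_var[OF assms(1-4)]
  by (simp add: copula_through_def glued_copula_def upper_generator_def spliced_def)

section \<open>The upper bound\<close>

lemma copulaD:
  assumes "copula C"
  shows "\<And>x. x \<in> {0..1} \<Longrightarrow> C x 0 = 0 \<and> C 0 x = 0 \<and> C x 1 = x \<and> C 1 x = x"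
    and "\<And>a b c d. a \<in> {0..1} \<Longrightarrow> b \<in> {0..1} \<Longrightarrow> c \<in> {0..1} \<Longrightarrow> d \<in> {0..1} \<Longrightarrow>
      a \<le> b \<Longrightarrow> c \<le> d \<Longrightarrow> 0 \<le> C b d + C a c - C b c - C a d"
  using assms unfolding copula_def by blast+

lemma copula_le_fst:
  assumes "copula C" "x \<in> {0..1}" "y \<in> {0..1}"
  shows "C x y \<le> x"
  using copulaD(2)[OF assms(1), of 0 x y 1] copulaD(1)[OF assms(1), of x] copulaD(1)[OF assms(1), of y]
    copulaD(1)[OF assms(1), of 1] assms(2,3) by simp

lemma copula_increment_bounds:
  assumes C: "copula C" and diag: "\<forall>t\<in>{0..1}. C t t = \<delta> t"
    and "0 \<le> x" "x \<le> u" "u \<le> v" "v \<le> 1"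
  shows "C x v - C x u \<le> v - u" "C x v - C x u \<le> \<delta> v - \<delta> u"
proof -
  have "0 \<le> C 1 v + C x u - C 1 u - C x v" "0 \<le> C v v + C x u - C v u - C x v"
    "0 \<le> C v u + C u 0 - C v 0 - C u u"
    using copulaD(2)[OF C, of x 1 u v] copulaD(2)[OF C, of x v u v] copulaD(2)[OF C, of u v 0 u]
      assms(3-6)
    by simp_all
  moreover have "C 1 v = v" "C 1 u = u" "C u 0 = 0" "C v 0 = 0" "C v v = \<delta> v" "C u u = \<delta> u"
    using copulaD(1)[OF C, of u] copulaD(1)[OF C, of v] diag assms(3-6) by simp_all
  ultimately show "C x v - C x u \<le> v - u" "C x v - C x u \<le> \<delta> v - \<delta> u" by linarith+
qed

lemma copula_le_f_delta:
  assumes C: "copula C" and diag: "\<forall>t\<in>{0..1}. C t t = \<delta> t" and "0 \<le> x" "x \<le> y" "y \<le> 1"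
  shows "C x y \<le> f_delta \<delta> x y"
proof -
  let ?h = "delta_hat \<delta>"
  have "total_variation ?h x y \<le> (2 * (y - C x y) - ?h y) - (2 * (x - C x x) - ?h x)"
  proof (rule total_variation_le_increments)
    fix u v assume "x \<le> u" "u \<le> v" "v \<le> y"
    then show "\<bar>?h v - ?h u\<bar> \<le> (2 * (v - C x v) - ?h v) - (2 * (u - C x u) - ?h u)"
      using copula_increment_bounds[OF C diag, of x u v] assms(3-5)
      unfolding delta_hat_def by (auto simp: abs_le_iff)
  qed (rule assms(4))
  moreover have "C x x = x - ?h x" using diag assms(3-5) unfolding delta_hat_def by auto
  ultimately show ?thesis using assms(4) unfolding f_delta_def TV_def by (simp add: field_simps)
qed

lemma upper_copula_le:
  assumes "diagonal_section \<delta>" "0 \<le> x" "x \<le> y" "y \<le> 1"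
  shows "upper_copula \<delta> x y \<le> x" "upper_copula \<delta> x y \<le> f_delta \<delta> x y"
proof -
  have nonempty: "{C x y | C. copula C \<and> (\<forall>t\<in>{0..1}. C t t = \<delta> t)} \<noteq> {}"
    using copula_through_copula_diagonal[OF assms(1), of 0 0] by auto
  have "C x y \<le> x" "C x y \<le> f_delta \<delta> x y" if "copula C" "\<forall>t\<in>{0..1}. C t t = \<delta> t" for C
    using copula_le_fst[OF that(1)] copula_le_f_delta[OF that] assms(2-4) by simp_all
  then show "upper_copula \<delta> x y \<le> x" "upper_copula \<delta> x y \<le> f_delta \<delta> x y"
    unfolding upper_copula_def by (auto intro!: cSup_least[OF nonempty])
qed

lemma upper_copula_eq_fst:
  assumes "diagonal_section \<delta>" "0 \<le> a" "a \<le> g" "g \<le> 1" "a \<le> f_delta \<delta> a g"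
  shows "upper_copula \<delta> a g = a"
proof (rule antisym)
  show "upper_copula \<delta> a g \<le> a" using upper_copula_le[OF assms(1-4)] by simp
  show "a \<le> upper_copula \<delta> a g"
    unfolding upper_copula_def
  proof (rule cSup_upper)
    show "a \<in> {C a g | C. copula C \<and> (\<forall>t\<in>{0..1}. C t t = \<delta> t)}"
      using copula_through_copula_diagonal[OF assms(1-4)] copula_through_at_corner[OF assms]
      by (auto intro!: exI[of _ "copula_through \<delta> a g"])
    show "bdd_above {C a g | C. copula C \<and> (\<forall>t\<in>{0..1}. C t t = \<delta> t)}"
      by (rule bdd_aboveI[of _ a]) (use copula_le_fst assms(2-4) in auto)
  qed
qed

section \<open>The lower bound\<close>

(* B_delta(x,y) = min x y - min of delta_hat between x and y (cf. lower_qcopula_eq_min); written as a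
   supremum of functions that are increasing and 1-Lipschitz in x and y, it is visibly a
   quasi-copula. *)
definition diagonal_minorant :: "(real \<Rightarrow> real) \<Rightarrow> real \<Rightarrow> real \<Rightarrow> real" where
  "diagonal_minorant \<delta> x y = (SUP t\<in>{0..1}. \<delta> t - max 0 (t - x) - max 0 (t - y))"

lemma quasi_copulaD:
  assumes "quasi_copula Q" "x1 \<in> {0..1}" "x2 \<in> {0..1}" "y \<in> {0..1}" "x1 \<le> x2"
  shows "Q x1 y \<le> Q x2 y" "Q x2 y - Q x1 y \<le> x2 - x1" "Q y x1 \<le> Q y x2" "Q y x2 - Q y x1 \<le> x2 - x1"
  using assms unfolding quasi_copula_def by blast+

lemma quasi_copula_ge_diagonal_term:
  assumes Q: "quasi_copula Q" and diag: "\<forall>t\<in>{0..1}. Q t t = \<delta> t"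
    and "x \<in> {0..1}" "y \<in> {0..1}" "t \<in> {0..1}"
  shows "\<delta> t - max 0 (t - x) - max 0 (t - y) \<le> Q x y"
proof -
  let ?x = "min x t" and ?y = "min y t"
  have "?x \<in> {0..1}" "?y \<in> {0..1}" using assms(3-5) by auto
  then have "Q t t - Q ?x t \<le> t - ?x" "Q ?x t - Q ?x ?y \<le> t - ?y" "Q ?x ?y \<le> Q x ?y" "Q x ?y \<le> Q x y"
    using quasi_copulaD(2)[OF Q, of ?x t t] quasi_copulaD(4)[OF Q, of ?y t ?x]
      quasi_copulaD(1)[OF Q, of ?x x ?y] quasi_copulaD(3)[OF Q, of ?y y x] assms(3-5)
    by auto
  moreover have "t - ?x = max 0 (t - x)" "t - ?y = max 0 (t - y)" by auto
  ultimately show ?thesis using diag assms(5) by fastforce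
qed

lemma diagonal_minorant_ge:
  assumes "diagonal_section \<delta>" "t \<in> {0..1}"
  shows "\<delta> t - max 0 (t - x) - max 0 (t - y) \<le> diagonal_minorant \<delta> x y"
  unfolding diagonal_minorant_def
proof (rule cSUP_upper[OF assms(2)])
  show "bdd_above ((\<lambda>t. \<delta> t - max 0 (t - x) - max 0 (t - y)) ` {0..1})"
    using diagonal_sectionD(1)[OF assms(1)] by (intro bdd_aboveI2[of _ _ 1]) fastforce
qed

lemma diagonal_minorant_le:
  assumes "\<And>t. t \<in> {0..1} \<Longrightarrow> \<delta> t - max 0 (t - x) - max 0 (t - y) \<le> M"
  shows "diagonal_minorant \<delta> x y \<le> M"
  unfolding diagonal_minorant_def by (rule cSUP_least) (use assms in auto)

lemma diagonal_minorant_commute: "diagonal_minorant \<delta> x y = diagonal_minorant \<delta> y x"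
  unfolding diagonal_minorant_def by (simp add: algebra_simps)

lemma diagonal_minorant_diagonal:
  assumes "diagonal_section \<delta>" "t \<in> {0..1}"
  shows "diagonal_minorant \<delta> t t = \<delta> t"
proof (rule antisym)
  show "diagonal_minorant \<delta> t t \<le> \<delta> t"
  proof (rule diagonal_minorant_le)
    fix s :: real assume "s \<in> {0..1}"
    then show "\<delta> s - max 0 (s - t) - max 0 (s - t) \<le> \<delta> t"
      using diagonal_sectionD(2)[OF assms(1), of s t] diagonal_sectionD(2)[OF assms(1), of t s] assms(2)
      by (cases "s \<le> t") auto
  qed
  show "\<delta> t \<le> diagonal_minorant \<delta> t t"
    using diagonal_minorant_ge[OF assms, of t t] by simp
qed

lemma diagonal_minorant_mono_lipschitz:
  assumes "diagonal_section \<delta>" "x1 \<le> x2"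
  shows "diagonal_minorant \<delta> x1 y \<le> diagonal_minorant \<delta> x2 y"
    and "diagonal_minorant \<delta> x2 y \<le> diagonal_minorant \<delta> x1 y + (x2 - x1)"
proof -
  show "diagonal_minorant \<delta> x1 y \<le> diagonal_minorant \<delta> x2 y"
  proof (rule diagonal_minorant_le)
    fix t :: real assume "t \<in> {0..1}"
    then show "\<delta> t - max 0 (t - x1) - max 0 (t - y) \<le> diagonal_minorant \<delta> x2 y"
      using diagonal_minorant_ge[OF assms(1), of t x2 y] assms(2) by auto
  qed
  show "diagonal_minorant \<delta> x2 y \<le> diagonal_minorant \<delta> x1 y + (x2 - x1)"
  proof (rule diagonal_minorant_le)
    fix t :: real assume "t \<in> {0..1}"
    then show "\<delta> t - max 0 (t - x2) - max 0 (t - y) \<le> diagonal_minorant \<delta> x1 y + (x2 - x1)"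
      using diagonal_minorant_ge[OF assms(1), of t x1 y] assms(2)
      by (auto simp: max_def split: if_splits)
  qed
qed

lemma quasi_copula_diagonal_minorant:
  assumes "diagonal_section \<delta>"
  shows "quasi_copula (diagonal_minorant \<delta>)"
proof -
  note bounds = diagonal_sectionD(1)[OF assms]
  have \<delta>0: "\<delta> 0 = 0" using bounds[of 0] by simp
  have term_le: "\<delta> t - max 0 (t - x) - max 0 (t - y) \<le> min x y" if "t \<in> {0..1}" for t x y
    using bounds[OF that] by auto
  have range: "diagonal_minorant \<delta> x y \<in> {0..1}" if "x \<in> {0..1}" "y \<in> {0..1}" for x y
  proof -
    have "diagonal_minorant \<delta> x y \<le> 1"
      by (rule diagonal_minorant_le) (use term_le[of _ x y] that in fastforce)
    moreover have "0 \<le> diagonal_minorant \<delta> x y"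
      using diagonal_minorant_ge[OF assms, of 0 x y] that \<delta>0 by simp
    ultimately show ?thesis by simp
  qed
  have boundary: "diagonal_minorant \<delta> x 0 = 0 \<and> diagonal_minorant \<delta> x 1 = x" if "x \<in> {0..1}" for x
  proof -
    have "diagonal_minorant \<delta> x 0 \<le> 0"
      by (rule diagonal_minorant_le) (use term_le[of _ x 0] that in fastforce)
    moreover have "diagonal_minorant \<delta> x 1 \<le> x"
      by (rule diagonal_minorant_le) (use term_le[of _ x 1] that in fastforce)
    moreover have "0 \<le> diagonal_minorant \<delta> x 0" "x \<le> diagonal_minorant \<delta> x 1"
      using diagonal_minorant_ge[OF assms, of 0 x 0] diagonal_minorant_ge[OF assms, of 1 x 1]
        diagonal_sectionD(3)[OF assms] \<delta>0 that by auto
    ultimately show ?thesis by simp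
  qed
  show ?thesis
    unfolding quasi_copula_def
    using range boundary diagonal_minorant_mono_lipschitz[OF assms] diagonal_minorant_commute[of \<delta>]
    by (smt (verit))
qed

lemma lower_qcopula_eq_diagonal_minorant:
  assumes "diagonal_section \<delta>" "x \<in> {0..1}" "y \<in> {0..1}"
  shows "lower_qcopula \<delta> x y = diagonal_minorant \<delta> x y"
  unfolding lower_qcopula_def
proof (rule cInf_eq_minimum)
  show "diagonal_minorant \<delta> x y \<in> {Q x y |Q. quasi_copula Q \<and> (\<forall>t\<in>{0..1}. Q t t = \<delta> t)}"
    using quasi_copula_diagonal_minorant[OF assms(1)] diagonal_minorant_diagonal[OF assms(1)] by blast
next
  fix v assume "v \<in> {Q x y |Q. quasi_copula Q \<and> (\<forall>t\<in>{0..1}. Q t t = \<delta> t)}"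
  then obtain Q where Q: "quasi_copula Q" "\<forall>t\<in>{0..1}. Q t t = \<delta> t" and v: "v = Q x y" by blast
  show "diagonal_minorant \<delta> x y \<le> v"
    unfolding v
    by (rule diagonal_minorant_le) (use quasi_copula_ge_diagonal_term[OF Q assms(2,3)] in blast)
qed

lemma lower_qcopula_ge:
  assumes "diagonal_section \<delta>" "0 \<le> x" "x \<le> t" "t \<le> y" "y \<le> 1"
  shows "x - delta_hat \<delta> t \<le> lower_qcopula \<delta> x y"
  using diagonal_minorant_ge[OF assms(1), of t x y] assms
  by (simp add: lower_qcopula_eq_diagonal_minorant delta_hat_def)

lemma lower_qcopula_eq_min:
  assumes "diagonal_section \<delta>" "0 \<le> x" "y \<le> 1" "t \<in> {x..y}"
    and min: "\<And>s. s \<in> {x..y} \<Longrightarrow> delta_hat \<delta> t \<le> delta_hat \<delta> s"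
  shows "lower_qcopula \<delta> x y = x - delta_hat \<delta> t"
proof (rule antisym)
  have "diagonal_minorant \<delta> x y \<le> x - delta_hat \<delta> t"
  proof (rule diagonal_minorant_le)
    fix s :: real assume s: "s \<in> {0..1}"
    have L: "delta_hat \<delta> y - delta_hat \<delta> s \<le> \<bar>y - s\<bar>"
      using lipschitz_onD[OF lipschitz_delta_hat[OF assms(1)], of y s] s assms(2-4)
      by (simp add: dist_real_def)
    consider "s < x" | "s \<in> {x..y}" | "y < s" using s by force
    then show "\<delta> s - max 0 (s - x) - max 0 (s - y) \<le> x - delta_hat \<delta> t"
    proof cases
      case 1
      then show ?thesis using diagonal_sectionD(2)[OF assms(1), of s x] min[of x] s assms(2-4)
        by (auto simp: delta_hat_def)
    next
      case 2
      then show ?thesis using min[of s] by (auto simp: delta_hat_def)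
    next
      case 3
      then show ?thesis using min[of y] L assms(4) by (auto simp: delta_hat_def)
    qed
  qed
  then show "lower_qcopula \<delta> x y \<le> x - delta_hat \<delta> t"
    using lower_qcopula_eq_diagonal_minorant[OF assms(1)] assms(2-4) by auto
  show "x - delta_hat \<delta> t \<le> lower_qcopula \<delta> x y"
    using lower_qcopula_ge[OF assms(1)] assms(2-4) by auto
qed

section \<open>The boundary point g_U\<close>

lemma closed_Df: "closed (Df \<delta>)"
proof -
  have "{(x, x) | x. x \<in> {0..1::real}} = (\<lambda>x. (x, x)) ` {0..1}" by auto
  also have "closed \<dots>"
    by (intro compact_imp_closed compact_continuous_image continuous_intros compact_Icc)
  finally show ?thesis unfolding Df_def by (intro closed_Un closed_closure)
qed

lemma gU_greatest:
  assumes "x0 \<in> {0..1}"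
  shows "gU \<delta> x0 \<in> {x0..1}" "(x0, gU \<delta> x0) \<in> Df \<delta>"
    and "\<And>y. y \<in> {0..1} \<Longrightarrow> (x0, y) \<in> Df \<delta> \<Longrightarrow> y \<le> gU \<delta> x0"
proof -
  define S where "S = {0..1} \<inter> (\<lambda>y. (x0, y)) -` Df \<delta>"
  have "closed S" unfolding S_def
    by (intro closed_Int closed_atLeastAtMost continuous_closed_vimage closed_Df continuous_intros)
  moreover have x0S: "x0 \<in> S" using assms unfolding S_def Df_def by auto
  moreover have "bdd_above S" unfolding S_def by (rule bdd_aboveI[of _ 1]) auto
  ultimately have SupS: "Sup S \<in> S" "\<And>y. y \<in> S \<Longrightarrow> y \<le> Sup S"
    by (auto intro: closed_contains_Sup cSup_upper)
  have "gU \<delta> x0 = Sup S" unfolding gU_def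
    by (rule Greatest_equality) (use SupS in \<open>auto simp: S_def\<close>)
  then show "gU \<delta> x0 \<in> {x0..1}" "(x0, gU \<delta> x0) \<in> Df \<delta>"
    and "\<And>y. y \<in> {0..1} \<Longrightarrow> (x0, y) \<in> Df \<delta> \<Longrightarrow> y \<le> gU \<delta> x0"
    using SupS x0S unfolding S_def by auto
qed

lemma f_delta_ge_at_gU:
  assumes \<delta>: "diagonal_section \<delta>" and x0: "x0 \<in> {0..1}"
  shows "x0 \<le> f_delta \<delta> x0 (gU \<delta> x0)"
proof -
  define g where "g = gU \<delta> x0"
  have g: "x0 \<le> g" "g \<le> 1" using gU_greatest(1)[OF x0] unfolding g_def by auto
  have f_eq: "f_delta \<delta> x0 y = y - delta_hat \<delta> x0 - (pos_var \<delta> y - pos_var \<delta> x0)"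
    if "x0 \<le> y" "y \<le> 1" for y
    using f_delta_eq_pos_var[OF \<delta> _ that] x0 by auto
  show ?thesis
  proof (cases "g = 1")
    case True
    have "2 * (pos_var \<delta> 1 - pos_var \<delta> x0) \<le> (1 - x0) + (delta_hat \<delta> 1 - delta_hat \<delta> x0)"
      using positive_variation_increment_bounds(2)[OF lipschitz_delta_hat[OF \<delta>], of x0 1] x0 by auto
    then show ?thesis
      using f_eq[of 1] delta_hat_bounds[OF \<delta>, of x0] delta_hat_bounds[OF \<delta>, of 1] x0 True
      unfolding g_def by auto
  next
    case False
    then have "g < 1" using g by simp
    (* y - f_delta delta x0 y is increasing in y, so x0 <= f_delta delta x0 y for y > g passes to g *)
    have "x0 + g - f_delta \<delta> x0 g \<le> y" if y: "g < y" "y < 1" for y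
    proof -
      have "(x0, y) \<notin> Df \<delta>"
        using gU_greatest(3)[OF x0, where \<delta> = \<delta> and y = y] y g x0 unfolding g_def by force
      then have "(x0, y) \<notin> Df_open \<delta>" unfolding Df_def using closure_subset by blast
      then have "x0 \<le> f_delta \<delta> x0 y" using y g x0 unfolding Df_open_def by auto
      moreover have "pos_var \<delta> g \<le> pos_var \<delta> y"
        using mono_onD[OF pos_var_monotonicities(1)[OF \<delta>], of g y] y g x0 by auto
      ultimately show ?thesis using f_eq[of g] f_eq[of y] y g by auto
    qed
    then have "x0 + g - f_delta \<delta> x0 g \<le> g" by (rule dense_ge_bounded[OF \<open>g < 1\<close>])
    then show ?thesis unfolding g_def by simp
  qed
qed

lemma f_delta_le_on_closure:
  assumes \<delta>: "diagonal_section \<delta>" and xy: "(x, y) \<in> closure (Df_open \<delta>)" "x < y"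
  shows "f_delta \<delta> x y \<le> x"
proof -
  define T where "T = {p :: real \<times> real. 0 \<le> fst p \<and> fst p \<le> snd p \<and> snd p \<le> 1}"
  define F where "F p = snd p - delta_hat \<delta> (fst p) - (pos_var \<delta> (snd p) - pos_var \<delta> (fst p)) - fst p"
    for p :: "real \<times> real"
  have f_eq: "f_delta \<delta> (fst p) (snd p) = F p + fst p" if "p \<in> T" for p
    using f_delta_eq_pos_var[OF \<delta>] that unfolding T_def F_def by auto
  have "closed T" unfolding T_def by (intro closed_Collect_conj closed_Collect_le continuous_intros)
  moreover have "continuous_on T F"
  proof -
    have "continuous_on {0..1} (delta_hat \<delta>)" "continuous_on {0..1} (pos_var \<delta>)"
      using lipschitz_delta_hat[OF \<delta>] lipschitz_positive_variation[OF lipschitz_delta_hat[OF \<delta>]]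
      by (auto intro: lipschitz_on_continuous_on)
    moreover have "fst ` T \<subseteq> {0..1}" "snd ` T \<subseteq> {0..1}" unfolding T_def by auto
    ultimately show ?thesis unfolding F_def
      by (intro continuous_intros continuous_on_compose2[of "{0..1}" _ T fst]
          continuous_on_compose2[of "{0..1}" _ T snd]) auto
  qed
  ultimately have "closed (T \<inter> F -` {..0})" by (intro continuous_closed_preimage closed_atMost)
  moreover have "closed {p :: real \<times> real. snd p \<le> fst p}"
    by (intro closed_Collect_le continuous_intros)
  moreover have "Df_open \<delta> \<subseteq> (T \<inter> F -` {..0}) \<union> {p. snd p \<le> fst p}"
  proof
    fix p assume p: "p \<in> Df_open \<delta>"
    show "p \<in> (T \<inter> F -` {..0}) \<union> {p. snd p \<le> fst p}"
    proof (cases "fst p \<le> snd p")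
      case True
      then have "p \<in> T" using p unfolding T_def Df_open_def by auto
      then show ?thesis using p f_eq True unfolding Df_open_def by force
    qed simp
  qed
  ultimately have "closure (Df_open \<delta>) \<subseteq> (T \<inter> F -` {..0}) \<union> {p. snd p \<le> fst p}"
    by (intro closure_minimal closed_Un)
  then have "(x, y) \<in> T" "F (x, y) \<le> 0" using xy by auto
  then show ?thesis using f_eq[of "(x, y)"] by simp
qed

lemma f_delta_le_at_gU:
  assumes "diagonal_section \<delta>" "x0 \<in> {0..1}" "x0 < gU \<delta> x0"
  shows "f_delta \<delta> x0 (gU \<delta> x0) \<le> x0"
proof (rule f_delta_le_on_closure[OF assms(1) _ assms(3)])
  show "(x0, gU \<delta> x0) \<in> closure (Df_open \<delta>)"
    using gU_greatest(2)[OF assms(2), where \<delta> = \<delta>] assms(3) unfolding Df_def by auto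
qed

lemma upper_minus_lower_le_delta_hat:
  assumes \<delta>: "diagonal_section \<delta>" and "0 \<le> x" "x \<le> y" "y \<le> t" "t \<le> g" "g \<le> 1"
    and "f_delta \<delta> x g \<le> x"
  shows "upper_copula \<delta> x y - lower_qcopula \<delta> x y \<le> delta_hat \<delta> t"
proof -
  note L = lipschitz_delta_hat[OF \<delta>]
  have "upper_copula \<delta> x y \<le> y - delta_hat \<delta> x - (pos_var \<delta> y - pos_var \<delta> x)"
    using upper_copula_le(2)[OF \<delta>, of x y] f_delta_eq_pos_var[OF \<delta>, of x y] assms(2-6) by auto
  moreover have "x - delta_hat \<delta> y \<le> lower_qcopula \<delta> x y"
    using lower_qcopula_ge[OF \<delta>, of x y y] assms(2-6) by auto
  moreover have "g - delta_hat \<delta> x - (pos_var \<delta> g - pos_var \<delta> x) \<le> x"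
    using assms(7) f_delta_eq_pos_var[OF \<delta>, of x g] assms(2-6) by auto
  moreover have "2 * (pos_var \<delta> g - pos_var \<delta> y) \<le> (g - y) + (delta_hat \<delta> g - delta_hat \<delta> y)"
    using positive_variation_increment_bounds(2)[OF L, of y g] assms(2-6) by auto
  moreover have "\<bar>delta_hat \<delta> t - delta_hat \<delta> y\<bar> \<le> t - y" "\<bar>delta_hat \<delta> g - delta_hat \<delta> t\<bar> \<le> g - t"
    using lipschitz_on_abs_diff_le[OF L, of y t] lipschitz_on_abs_diff_le[OF L, of t g] assms(2-6)
    by auto
  ultimately show ?thesis by (simp add: abs_le_iff)
qed

theorem lemma4p5:
  fixes \<delta> :: "real \<Rightarrow> real" and x0 :: real
  assumes "diagonal_section \<delta>" and "x0 \<in> {0..1}"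
  shows "gU \<delta> x0 \<in> {x0..1}
    \<and> (\<forall>y\<in>{x0..1}. upper_copula \<delta> x0 y - lower_qcopula \<delta> x0 y
          \<le> upper_copula \<delta> x0 (gU \<delta> x0) - lower_qcopula \<delta> x0 (gU \<delta> x0))
    \<and> (\<exists>t\<in>{x0..gU \<delta> x0}. delta_hat \<delta> t
          = upper_copula \<delta> x0 (gU \<delta> x0) - lower_qcopula \<delta> x0 (gU \<delta> x0))
    \<and> (\<forall>t\<in>{x0..gU \<delta> x0}.
          upper_copula \<delta> x0 (gU \<delta> x0) - lower_qcopula \<delta> x0 (gU \<delta> x0) \<le> delta_hat \<delta> t)"
proof -
  note \<delta> = assms(1)
  define g where "g = gU \<delta> x0"
  have x0: "0 \<le> x0" and g: "x0 \<le> g" "g \<le> 1"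
    using assms(2) gU_greatest(1)[OF assms(2)] unfolding g_def by auto
  obtain tg where tg: "tg \<in> {x0..g}"
    and tg_min: "\<And>t. t \<in> {x0..g} \<Longrightarrow> delta_hat \<delta> tg \<le> delta_hat \<delta> t"
    using delta_hat_attains_min[OF \<delta> x0 g] by blast
  have gap_at_g: "upper_copula \<delta> x0 g - lower_qcopula \<delta> x0 g = delta_hat \<delta> tg"
    using upper_copula_eq_fst[OF \<delta> x0 g f_delta_ge_at_gU[OF assms, folded g_def]]
      lower_qcopula_eq_min[OF \<delta> x0 g(2) tg tg_min] by simp
  have "upper_copula \<delta> x0 y - lower_qcopula \<delta> x0 y \<le> delta_hat \<delta> tg" if y: "y \<in> {x0..1}" for y
  proof (cases "tg \<le> y")
    case True
    then show ?thesis
      using upper_copula_le(1)[OF \<delta> x0, of y] lower_qcopula_ge[OF \<delta> x0, of tg y] tg y by auto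
  next
    case False
    then have "f_delta \<delta> x0 g \<le> x0" using f_delta_le_at_gU[OF assms] tg y unfolding g_def by auto
    then show ?thesis using upper_minus_lower_le_delta_hat[OF \<delta> x0, of y tg g] False tg y g by auto
  qed
  then show ?thesis using g tg tg_min gap_at_g unfolding g_def[symmetric] by auto
qed

end
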